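(* Let $r>1$ be real, and let $p_m,q$ be $r$-mighty primes with $q^2<p_m$. Then the open interval $$G=\left(\sigma_{-r}(q)\,u_m(r),\ \sigma_{-r}(qp_m)\right)$$ is a gap of $\sigma_{-r}(\mathbb{S})$, i.e. a bounded connected component of $\mathbb{R}\setminus\sigma_{-r}(\mathbb{S})$.
   Context: $p_m$ denotes the $m$-th prime ($p_1=2$). For real $r>1$, $\sigma_{-r}(n)=\sum_{d\mid n}d^{-r}$ for $n\in\mathbb{N}$. A Steinitz (supernatural) number is a formal product $n=\prod_{p}p^{\alpha_p}$ over all primes with $\alpha_p\in\mathbb{Z}_{\ge0}\cup\{\infty\}$; write $v_p(n)=\alpha_p$, and let $\mathbb{S}$ be the set of Steinitz numbers. $\sigma_{-r}$ is extended to $\mathbb{S}$ multiplicatively: $\sigma_{-r}(n)=\prod_p\sigma_{-r}(p^{\alpha_p})$, where $\sigma_{-r}(p^\alpha)=\sum_{i=0}^{\alpha}p^{-ri}$ for finite $\alpha$ and $\sigma_{-r}(p^\infty)=\frac{1}{1-p^{-r}}$. Define $u_m(r)=\prod_{t=m+1}^\infty\frac{1}{1-p_t^{-r}}$. A prime $p_m$ is called $r$-mighty if $1+p_m^{-r}>u_m(r)$. *)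

theory Defs
  imports "HOL-Analysis.Analysis" "HOL-Library.Extended_Nat"
    "HOL-Computational_Algebra.Primes" "HOL-Library.Infinite_Set"
begin

text \<open>The m-th prime, 1-indexed: nth_prime 1 = 2.\<close>
definition nth_prime :: "nat \<Rightarrow> nat" where
  "nth_prime m = enumerate {p::nat. prime p} (m - 1)"

definition sigma_nat :: "real \<Rightarrow> nat \<Rightarrow> real" where
  "sigma_nat r n = (\<Sum>d | d dvd n. (real d) powr (- r))"

text \<open>Steinitz numbers: exponent functions on primes (value 0 at non-primes).\<close>
definition steinitz :: "(nat \<Rightarrow> enat) set" where
  "steinitz = {\<alpha>. \<forall>n. \<not> prime n \<longrightarrow> \<alpha> n = 0}"

definition sigma_pp :: "real \<Rightarrow> nat \<Rightarrow> enat \<Rightarrow> real" where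
  "sigma_pp r p a = (case a of
      enat k \<Rightarrow> (\<Sum>i\<le>k. (real p) powr (- r * real i))
    | \<infinity> \<Rightarrow> 1 / (1 - (real p) powr (- r)))"

definition sigma_st :: "real \<Rightarrow> (nat \<Rightarrow> enat) \<Rightarrow> real" where
  "sigma_st r \<alpha> = (\<Prod>k. sigma_pp r (nth_prime (Suc k)) (\<alpha> (nth_prime (Suc k))))"

definition u_tail :: "nat \<Rightarrow> real \<Rightarrow> real" where
  "u_tail m r = (\<Prod>k. 1 / (1 - (real (nth_prime (m + 1 + k))) powr (- r)))"

definition mighty :: "real \<Rightarrow> nat \<Rightarrow> bool" where
  "mighty r p \<longleftrightarrow> (\<exists>m\<ge>1. p = nth_prime m \<and> 1 + (real p) powr (- r) > u_tail m r)"

end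

theory Submission
  imports Defs
begin

text \<open>Write \<open>q = p\<^sub>j\<close>, \<open>p = p\<^sub>m\<close> and \<open>\<sigma>\<close> for \<open>\<sigma>\<^sub>-\<^sub>r\<close>, a product of local factors.
  If a Steinitz number \<open>n\<close> is divisible by a prime below \<open>q\<close>, by \<open>q\<^sup>2\<close>, or by \<open>q\<close> and a
  prime in \<open>(q, p]\<close>, then \<open>\<sigma>(n) \<ge> \<sigma>(q p)\<close>: in the first case because \<open>q\<^sup>2 < p\<close>, in the
  other two because of the key inequality \<open>p\<^sup>-\<^sup>r (1 + q\<^sup>-\<^sup>r) \<le> q\<^sup>-\<^sup>2\<^sup>r\<close>. Otherwise either
  \<open>q\<close> does not divide \<open>n\<close> and all prime factors of \<open>n\<close> exceed \<open>q\<close>, so that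
  \<open>\<sigma>(n) \<le> u\<^sub>j < \<sigma>(q)\<close> by mightiness of \<open>q\<close>, or \<open>n\<close> is \<open>q\<close> times primes beyond \<open>p\<close>, so that
  \<open>\<sigma>(n) \<le> \<sigma>(q) u\<^sub>m\<close>. Both ends are values of \<open>\<sigma>\<close>, and mightiness of \<open>p\<close> makes the interval
  nonempty.

  The key inequality follows from \<open>q\<^sup>2 < p\<close> alone when \<open>r \<ge> 2\<close>. For \<open>r < 2\<close> mightiness is very
  restrictive: it says \<open>\<Sum>\<^bsub>p' > q\<^esub> (q/p')\<^sup>r < 1\<close>, whereas Chebyshev's lower bound for the
  number of primes in \<open>(q, tq]\<close> gives \<open>\<Sum>\<^bsub>p' > q\<^esub> (q/p')\<^sup>2 \<ge> 1\<close> for every prime \<open>q \<ge> 5\<close>.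
  This leaves \<open>q \<in> {2, 3}\<close> and \<open>r > 3/2\<close>, where the inequality is checked numerically.\<close>

text \<open>Primes counted from 0, so that \<open>pr 0 = 2\<close> and \<open>p\<^sub>m = pr (m - 1)\<close>.\<close>
abbreviation pr :: "nat \<Rightarrow> nat" where
  "pr k \<equiv> nth_prime (Suc k)"

lemma pr_eq_enumerate: "pr k = enumerate {p. prime p} k"
  by (simp add: nth_prime_def)

lemma prime_pr: "prime (pr k)"
  using enumerate_in_set[OF primes_infinite] by (simp add: pr_eq_enumerate)

lemma strict_mono_pr: "strict_mono pr"
  using enumerate_mono[OF _ primes_infinite] by (simp add: strict_mono_def pr_eq_enumerate)

lemma pr_surj: "prime p \<Longrightarrow> \<exists>k. pr k = p"
  using enumerate_Ex[OF primes_infinite, of p] by (simp add: pr_eq_enumerate)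

lemma pr_ge: "k + 2 \<le> pr k"
proof (induction k)
  case 0
  show ?case using prime_ge_2_nat[OF prime_pr[of 0]] by simp
next
  case (Suc k)
  then show ?case using strict_mono_less[OF strict_mono_pr, of k "Suc k"] by simp
qed

lemma pr_gt_1: "1 < pr k"
  using pr_ge[of k] by simp

section \<open>Euler products\<close>

lemma sigma_pp_enat: "0 < p \<Longrightarrow> sigma_pp r p (enat k) = (\<Sum>i\<le>k. (real p powr - r) ^ i)"
  by (simp add: sigma_pp_def powr_realpow[symmetric] powr_powr mult.commute)

lemma sigma_pp_infinity: "sigma_pp r p \<infinity> = 1 / (1 - real p powr - r)"
  by (simp add: sigma_pp_def)

lemma sigma_pp_zero: "0 < p \<Longrightarrow> sigma_pp r p 0 = 1"
  by (simp add: sigma_pp_def zero_enat_def)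

lemma sigma_pp_one: "0 < p \<Longrightarrow> sigma_pp r p 1 = 1 + real p powr - r"
  using sigma_pp_enat[of p r 1] by (simp add: one_enat_def)

lemma powr_neg_bounds:
  fixes x r :: real
  assumes "1 < x" "0 < r"
  shows "0 < x powr - r" "x powr - r < 1"
  using assms powr_less_one[of x "- r"] by auto

lemma geometric_partial_sum_le:
  fixes x :: real
  assumes "0 \<le> x" "x < 1"
  shows "(\<Sum>i\<le>k. x ^ i) \<le> 1 / (1 - x)"
  using sum_le_suminf[OF summable_geometric, of x "{..k}"] suminf_geometric[of x] assms by simp

lemma sigma_pp_ge_partial_sum:
  assumes "1 < p" "0 < r" "enat k \<le> a"
  shows "(\<Sum>i\<le>k. (real p powr - r) ^ i) \<le> sigma_pp r p a"
proof (cases a)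
  case (enat l)
  with assms show ?thesis by (auto simp: sigma_pp_enat intro!: sum_mono2)
next
  case infinity
  with assms show ?thesis
    using powr_neg_bounds[of "real p" r] by (simp add: sigma_pp_infinity geometric_partial_sum_le)
qed

lemma sigma_pp_le_infinity:
  assumes "1 < p" "0 < r"
  shows "sigma_pp r p a \<le> sigma_pp r p \<infinity>"
proof (cases a)
  case (enat l)
  with assms show ?thesis
    using powr_neg_bounds[of "real p" r] by (simp add: sigma_pp_enat sigma_pp_infinity geometric_partial_sum_le)
qed simp

lemma sigma_pp_ge_1:
  "1 < p \<Longrightarrow> 0 < r \<Longrightarrow> 1 \<le> sigma_pp r p a"
  using sigma_pp_ge_partial_sum[of p r 0 a] by (simp add: zero_enat_def[symmetric])

lemma sigma_pp_ge_linear: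
  "1 < p \<Longrightarrow> 0 < r \<Longrightarrow> a \<noteq> 0 \<Longrightarrow> 1 + real p powr - r \<le> sigma_pp r p a"
  using sigma_pp_ge_partial_sum[of p r 1 a]
  by (cases a) (auto simp: one_enat_def zero_enat_def)

lemma sigma_pp_ge_quadratic:
  "1 < p \<Longrightarrow> 0 < r \<Longrightarrow> 2 \<le> a \<Longrightarrow> 1 + real p powr - r + (real p powr - r)\<^sup>2 \<le> sigma_pp r p a"
  using sigma_pp_ge_partial_sum[of p r 2 a] by (simp add: numeral_eq_enat numeral_2_eq_2)

definition euler_factor :: "real \<Rightarrow> (nat \<Rightarrow> enat) \<Rightarrow> nat \<Rightarrow> real" where
  "euler_factor r \<alpha> k = sigma_pp r (pr k) (\<alpha> (pr k))"

lemma sigma_st_eq_prodinf: "sigma_st r \<alpha> = (\<Prod>k. euler_factor r \<alpha> k)"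
  by (simp add: sigma_st_def euler_factor_def)

lemma u_tail_eq_prodinf: "u_tail n r = (\<Prod>k. euler_factor r (\<lambda>_. \<infinity>) (k + n))"
  by (simp add: u_tail_def euler_factor_def sigma_pp_infinity add.commute)

lemma euler_factor_ge_1: "0 < r \<Longrightarrow> 1 \<le> euler_factor r \<alpha> k"
  by (simp add: euler_factor_def sigma_pp_ge_1[OF pr_gt_1])

lemma euler_factor_le_infinity: "0 < r \<Longrightarrow> euler_factor r \<alpha> k \<le> euler_factor r (\<lambda>_. \<infinity>) k"
  by (simp add: euler_factor_def sigma_pp_le_infinity[OF pr_gt_1])

lemma euler_factor_eq_1: "\<alpha> (pr k) = 0 \<Longrightarrow> euler_factor r \<alpha> k = 1"
  using pr_gt_1[of k] by (simp add: euler_factor_def sigma_pp_zero)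

lemma euler_factor_infinity_minus_1_le:
  assumes "1 < r" "1 \<le> k"
  shows "euler_factor r (\<lambda>_. \<infinity>) k - 1 \<le> 2 * real k powr - r"
proof -
  define x where "x = real (pr k) powr - r"
  have x: "0 < x" "x < 1"
    using powr_neg_bounds[of "real (pr k)" r] pr_gt_1[of k] assms by (auto simp: x_def)
  have "x \<le> 2 powr - r"
    unfolding x_def using pr_ge[of k] assms by (intro powr_mono2') auto
  also have "\<dots> \<le> 2 powr - 1"
    using assms by (intro powr_mono) auto
  finally have "x \<le> 1 / 2"
    by (simp add: powr_minus_divide)
  then have "euler_factor r (\<lambda>_. \<infinity>) k - 1 \<le> 2 * x"
    using x by (simp add: euler_factor_def sigma_pp_infinity x_def[symmetric] field_simps)
  also have "x \<le> real k powr - r"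
    unfolding x_def using pr_ge[of k] assms by (intro powr_mono2') auto
  finally show ?thesis
    by simp
qed

lemma convergent_prod_euler_factor:
  assumes "1 < r"
  shows "convergent_prod (euler_factor r \<alpha>)"
proof -
  have "summable (\<lambda>k. 2 * real k powr - r)"
    using assms by (simp add: summable_real_powr_iff)
  moreover have "norm (norm (euler_factor r \<alpha> k - 1)) \<le> 2 * real k powr - r" if "1 \<le> k" for k
    using euler_factor_ge_1[of r \<alpha> k] euler_factor_le_infinity[of r \<alpha> k]
      euler_factor_infinity_minus_1_le[OF assms that] assms
    by simp
  ultimately have "summable (\<lambda>k. norm (euler_factor r \<alpha> k - 1))"
    by (rule summable_comparison_test'[where N = 1])
  then show ?thesis
    by (intro abs_convergent_prod_imp_convergent_prod summable_imp_abs_convergent_prod)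
qed

lemma prod_le_prodinf_of_ge_1:
  fixes f :: "nat \<Rightarrow> real"
  assumes "convergent_prod f" "\<And>k. 1 \<le> f k" "finite I"
  shows "(\<Prod>i\<in>I. f i) \<le> prodinf f"
proof -
  obtain n where "I \<subseteq> {..<n}"
    using assms(3) finite_nat_iff_bounded by auto
  then have "(\<Prod>i\<in>I. f i) \<le> (\<Prod>i<n. f i)"
    using assms(2) by (intro prod_mono2) (auto intro: order_trans[OF zero_le_one])
  also have "\<dots> \<le> prodinf f"
    using assms(1,2) by (intro prod_le_prodinf) (auto intro: order_trans[OF zero_le_one])
  finally show ?thesis .
qed

lemma sigma_st_split:
  assumes "1 < r"
  shows "sigma_st r \<alpha> = (\<Prod>k. euler_factor r \<alpha> (k + n)) * (\<Prod>k<n. euler_factor r \<alpha> k)"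
proof -
  have "euler_factor r \<alpha> k \<noteq> 0" for k
    using euler_factor_ge_1[of r \<alpha> k] assms by auto
  then show ?thesis
    unfolding sigma_st_eq_prodinf
    by (intro prodinf_split_initial_segment convergent_prod_euler_factor assms)
qed

lemma prod_le_sigma_st:
  "1 < r \<Longrightarrow> finite I \<Longrightarrow> (\<Prod>k\<in>I. euler_factor r \<alpha> k) \<le> sigma_st r \<alpha>"
  unfolding sigma_st_eq_prodinf
  by (intro prod_le_prodinf_of_ge_1 convergent_prod_euler_factor euler_factor_ge_1) auto

lemma sigma_st_le_u_tail_times_prefix:
  assumes "1 < r"
  shows "sigma_st r \<alpha> \<le> u_tail n r * (\<Prod>k<n. euler_factor r \<alpha> k)"
proof -
  have "(\<Prod>k. euler_factor r \<alpha> (k + n)) \<le> u_tail n r"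
    unfolding u_tail_eq_prodinf using assms
    by (intro prodinf_le convergent_prod_has_prod)
       (auto simp: convergent_prod_euler_factor euler_factor_le_infinity
             intro: order_trans[OF zero_le_one euler_factor_ge_1])
  moreover have "0 \<le> (\<Prod>k<n. euler_factor r \<alpha> k)"
    using assms euler_factor_ge_1[of r \<alpha>] by (auto intro: prod_nonneg order_trans[OF zero_le_one])
  ultimately show ?thesis
    using sigma_st_split[OF assms, of \<alpha> n] by (simp add: mult_right_mono)
qed

lemma prod_le_u_tail:
  assumes "1 < r" "finite I" "I \<subseteq> {n..}"
  shows "(\<Prod>k\<in>I. euler_factor r (\<lambda>_. \<infinity>) k) \<le> u_tail n r"
proof -
  have "(\<Prod>k\<in>I. euler_factor r (\<lambda>_. \<infinity>) k) = (\<Prod>k\<in>I. euler_factor r (\<lambda>_. \<infinity>) (k - n + n))"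
    using assms(3) by (intro prod.cong) auto
  also have "\<dots> = (\<Prod>i\<in>(\<lambda>k. k - n) ` I. euler_factor r (\<lambda>_. \<infinity>) (i + n))"
    using assms(3) by (subst prod.reindex) (auto intro: inj_on_diff_nat)
  also have "\<dots> \<le> u_tail n r"
    unfolding u_tail_eq_prodinf using assms
    by (intro prod_le_prodinf_of_ge_1 euler_factor_ge_1) (auto simp: convergent_prod_euler_factor)
  finally show ?thesis .
qed

lemma u_tail_ge_1: "1 < r \<Longrightarrow> 1 \<le> u_tail n r"
  using prod_le_u_tail[of r "{}" n] by simp

lemma prod_euler_factor_eq_support:
  assumes "K \<subseteq> {..<n}" "\<And>k. k < n \<Longrightarrow> k \<notin> K \<Longrightarrow> \<alpha> (pr k) = 0"
  shows "(\<Prod>k<n. euler_factor r \<alpha> k) = (\<Prod>k\<in>K. euler_factor r \<alpha> k)"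
  using assms by (intro prod.mono_neutral_right) (auto simp: euler_factor_eq_1)

section \<open>Mighty primes\<close>

lemma mighty_pr_iff: "mighty r (pr j) \<longleftrightarrow> u_tail (Suc j) r < 1 + real (pr j) powr - r"
proof
  assume "mighty r (pr j)"
  then obtain m where m: "1 \<le> m" "pr j = nth_prime m" "u_tail m r < 1 + real (pr j) powr - r"
    unfolding mighty_def by auto
  then have "j = m - 1"
    using strict_mono_eq[OF strict_mono_pr, of j "m - 1"] by simp
  then have "m = Suc j"
    using m(1) by simp
  then show "u_tail (Suc j) r < 1 + real (pr j) powr - r"
    using m(3) by simp
next
  assume "u_tail (Suc j) r < 1 + real (pr j) powr - r"
  then show "mighty r (pr j)"
    unfolding mighty_def by (intro exI[of _ "Suc j"]) simp
qed

lemma mighty_imp_eq_pr: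
  assumes "mighty r q"
  shows "\<exists>j. q = pr j"
proof -
  obtain m where "1 \<le> m" "q = nth_prime m"
    using assms unfolding mighty_def by auto
  then have "q = pr (m - 1)"
    by simp
  then show ?thesis ..
qed

lemma one_plus_sum_le_prod:
  fixes x :: "'a \<Rightarrow> real"
  assumes "finite I" "\<And>i. i \<in> I \<Longrightarrow> 0 \<le> x i"
  shows "1 + (\<Sum>i\<in>I. x i) \<le> (\<Prod>i\<in>I. 1 + x i)"
  using assms
proof (induction I rule: finite_induct)
  case (insert a I)
  then have "0 \<le> x a" "0 \<le> (\<Sum>i\<in>I. x i)"
    by (auto intro: sum_nonneg)
  then have "1 + (\<Sum>i\<in>insert a I. x i) \<le> (1 + x a) * (1 + (\<Sum>i\<in>I. x i))"
    using insert.hyps by (simp add: algebra_simps)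
  also have "\<dots> \<le> (\<Prod>i\<in>insert a I. 1 + x i)"
    using insert \<open>0 \<le> x a\<close> by (simp add: mult_left_mono)
  finally show ?case .
qed simp

lemma mighty_sum_powr_less:
  assumes r: "1 < r" and q: "mighty r q"
    and F: "finite F" "\<And>p. p \<in> F \<Longrightarrow> prime p \<and> q < p"
  shows "(\<Sum>p\<in>F. real p powr - r) < real q powr - r"
proof -
  obtain j where j: "q = pr j"
    using mighty_imp_eq_pr[OF q] by blast
  define I where "I = pr -` F"
  have inj: "inj pr"
    by (rule strict_mono_imp_inj_on[OF strict_mono_pr])
  have "F \<subseteq> range pr"
  proof
    fix p
    assume "p \<in> F"
    then obtain k where "pr k = p"
      using F(2) pr_surj by blast
    then show "p \<in> range pr"
      by (metis rangeI)
  qed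
  then have F_eq: "F = pr ` I"
    unfolding I_def by (simp add: image_vimage_eq Int_absorb2)
  have "finite I"
    unfolding I_def using finite_vimageI[OF F(1) inj] .
  have I_ge: "I \<subseteq> {Suc j..}"
  proof
    fix i
    assume "i \<in> I"
    then have "pr j < pr i"
      using F(2) by (simp add: I_def j)
    then show "i \<in> {Suc j..}"
      using strict_mono_less[OF strict_mono_pr] by simp
  qed
  have "1 + (\<Sum>p\<in>F. real p powr - r) = 1 + (\<Sum>i\<in>I. real (pr i) powr - r)"
    unfolding F_eq by (simp add: sum.reindex inj_on_subset[OF inj])
  also have "\<dots> \<le> (\<Prod>i\<in>I. 1 + real (pr i) powr - r)"
    using \<open>finite I\<close> by (intro one_plus_sum_le_prod) auto
  also have "\<dots> \<le> (\<Prod>i\<in>I. euler_factor r (\<lambda>_. \<infinity>) i)"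
    using r pr_gt_1
    by (intro prod_mono) (auto simp: euler_factor_def intro: sigma_pp_ge_linear add_nonneg_nonneg)
  also have "\<dots> \<le> u_tail (Suc j) r"
    using r \<open>finite I\<close> I_ge by (rule prod_le_u_tail)
  also have "\<dots> < 1 + real q powr - r"
    using q by (simp add: j mighty_pr_iff)
  finally show ?thesis
    by simp
qed

lemma mighty_weighted_sum_less:
  assumes r: "1 < r" "r \<le> e" and q: "mighty r q"
    and F: "finite F" "\<And>p. p \<in> F \<Longrightarrow> prime p \<and> q < p"
  shows "(\<Sum>p\<in>F. (real q / real p) powr e) < 1"
proof -
  have q0: "0 < real q"
    using mighty_imp_eq_pr[OF q] pr_gt_1 by (metis of_nat_0_less_iff order.strict_trans zero_less_one)
  have "(\<Sum>p\<in>F. (real q / real p) powr e) \<le> (\<Sum>p\<in>F. (real q / real p) powr r)"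
    using r by (intro sum_mono powr_mono') (auto simp: divide_le_eq_1 dest: F(2))
  also have "\<dots> = real q powr r * (\<Sum>p\<in>F. real p powr - r)"
    by (simp add: sum_distrib_left powr_divide powr_minus_divide)
  also have "\<dots> < real q powr r * real q powr - r"
    using mighty_sum_powr_less[OF r(1) q F] q0 by simp
  also have "\<dots> = 1"
    using q0 by (simp add: powr_minus_divide)
  finally show ?thesis .
qed

section \<open>Primes in short intervals\<close>

definition primes_between :: "nat \<Rightarrow> nat \<Rightarrow> nat set" where
  "primes_between a b = {p. prime p \<and> a < p \<and> p \<le> b}"

lemma finite_primes_between [simp]: "finite (primes_between a b)"
  unfolding primes_between_def by (rule finite_subset[of _ "{..b}"]) auto

text \<open>Trial division up to \<open>sqrt p\<close>. Unlike the code equation of \<^const>\<open>prime\<close>, this is evaluated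
  quickly by the simplifier on numerals of a few thousand.\<close>
function no_divisor_from :: "nat \<Rightarrow> nat \<Rightarrow> bool" where
  "no_divisor_from p d = (if p < d * d then True else \<not> d dvd p \<and> no_divisor_from p (Suc d))"
  by auto
termination
proof (relation "Wellfounded.measure (\<lambda>(p, d). Suc p - d)")
  fix p d :: nat
  assume "\<not> p < d * d"
  then have "d \<le> p"
    using le_square[of d] by linarith
  then show "((p, Suc d), p, d) \<in> Wellfounded.measure (\<lambda>(p, d). Suc p - d)"
    by simp
qed simp

declare no_divisor_from.simps [simp del]

lemma no_divisor_from_iff: "no_divisor_from p d \<longleftrightarrow> (\<forall>e. d \<le> e \<longrightarrow> e * e \<le> p \<longrightarrow> \<not> e dvd p)"
proof (induction p d rule: no_divisor_from.induct)
  case (1 p d)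
  show ?case
  proof (cases "p < d * d")
    case True
    have "\<not> (d \<le> e \<and> e * e \<le> p)" for e
      using True mult_le_mono[of d e d e] by linarith
    then show ?thesis
      by (subst no_divisor_from.simps) (use True in auto)
  next
    case False
    have "d \<le> e \<longleftrightarrow> e = d \<or> Suc d \<le> e" for e
      by auto
    then show ?thesis
      using "1.IH"[OF False] False by (subst no_divisor_from.simps) (auto simp: le_square)
  qed
qed

lemma prime_iff_no_divisor_from: "prime p \<longleftrightarrow> 1 < p \<and> no_divisor_from p 2"
proof
  assume p: "prime p"
  have "\<not> e dvd p" if "2 \<le> e" "e * e \<le> p" for e
  proof
    assume "e dvd p"
    then have "e = p"
      using p that(1) by (auto simp: prime_nat_iff)
    then show False
      using that prime_gt_1_nat[OF p] by simp
  qed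
  then show "1 < p \<and> no_divisor_from p 2"
    using prime_gt_1_nat[OF p] by (simp add: no_divisor_from_iff)
next
  assume p: "1 < p \<and> no_divisor_from p 2"
  show "prime p"
    unfolding prime_nat_iff'
  proof (intro conjI ballI notI)
    fix n
    assume n: "n \<in> {2..<p}" and "n dvd p"
    then obtain m where m: "p = n * m"
      by blast
    with n have "2 \<le> m"
      by (cases m) (auto simp: Suc_le_eq intro: Nat.gr0I)
    have "min n m * min n m \<le> p"
      unfolding m by (intro mult_mono) auto
    moreover have "min n m dvd p"
      unfolding m by (simp add: min_def)
    ultimately show False
      using p n \<open>2 \<le> m\<close> by (auto simp: no_divisor_from_iff)
  qed (use p in simp)
qed

lemma less_power_self: "2 \<le> (p::nat) \<Longrightarrow> k < p ^ k"
  using less_exp[of k] power_mono[of 2 p k] by linarith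

lemma multiplicity_eq_card_prime_powers_dvd:
  assumes p: "prime (p::nat)" and m: "0 < m"
  shows "multiplicity p m = card {i\<in>{1..m}. p ^ i dvd m}"
proof -
  have "multiplicity p m < p ^ multiplicity p m"
    using prime_ge_2_nat[OF p] by (rule less_power_self)
  also have "\<dots> \<le> m"
    using m by (intro dvd_imp_le multiplicity_dvd)
  finally have "{i\<in>{1..m}. p ^ i dvd m} = {1..multiplicity p m}"
    using m prime_gt_1_nat[OF p] by (auto simp: power_dvd_iff_le_multiplicity)
  then show ?thesis
    by simp
qed

lemma multiplicity_fact:
  assumes p: "prime (p::nat)"
  shows "multiplicity p (fact n) = (\<Sum>i\<in>{1..n}. n div p ^ i)"
proof (induction n)
  case (Suc n)
  have p_pow: "0 < p ^ i" for i
    using prime_gt_0_nat[OF p] by simp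
  have "multiplicity p (fact (Suc n) :: nat) = multiplicity p (Suc n) + multiplicity p (fact n :: nat)"
    using p by (simp add: prime_elem_multiplicity_mult_distrib del: mult_Suc)
  also have "multiplicity p (Suc n) = (\<Sum>i\<in>{1..Suc n}. if p ^ i dvd Suc n then 1 else 0)"
    unfolding multiplicity_eq_card_prime_powers_dvd[OF p zero_less_Suc] card_eq_sum
    by (rule sum.inter_filter) simp
  also have "multiplicity p (fact n :: nat) = (\<Sum>i\<in>{1..Suc n}. n div p ^ i)"
  proof -
    have "n < p ^ Suc n"
      using less_power_self[OF prime_ge_2_nat[OF p], of "Suc n"] by simp
    then show ?thesis
      using Suc.IH by (simp add: sum.cl_ivl_Suc)
  qed
  also have "(\<Sum>i\<in>{1..Suc n}. if p ^ i dvd Suc n then 1 else 0) + (\<Sum>i\<in>{1..Suc n}. n div p ^ i)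
      = (\<Sum>i\<in>{1..Suc n}. Suc n div p ^ i)"
    unfolding sum.distrib[symmetric] using p_pow by (intro sum.cong) (auto simp: div_Suc dvd_eq_mod_eq_0)
  finally show ?case .
qed simp

lemma double_div_le: "2 * (n div d) \<le> (2 * n) div (d::nat)"
proof (cases "d = 0")
  case False
  have "2 * (n div d) * d \<le> 2 * n"
    by (metis mult.assoc mult_le_mono2 div_times_less_eq_dividend)
  then show ?thesis
    using False by (simp add: less_eq_div_iff_mult_less_eq)
qed simp

lemma div_double_le: "0 < (d::nat) \<Longrightarrow> (2 * n) div d \<le> 2 * (n div d) + 1"
proof -
  assume d: "0 < d"
  have "n < (n div d + 1) * d"
    using d by (metis div_less_iff_less_mult less_add_one)
  then have "2 * n < (2 * (n div d) + 2) * d"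
    by (simp add: algebra_simps)
  then have "(2 * n) div d < 2 * (n div d) + 2"
    using d by (simp add: div_less_iff_less_mult)
  then show ?thesis
    by simp
qed

lemma multiplicity_central_binomial:
  assumes p: "prime (p::nat)"
  shows "multiplicity p ((2 * n) choose n) = (\<Sum>i\<in>{1..2 * n}. (2 * n) div p ^ i - 2 * (n div p ^ i))"
proof -
  have "fact (2 * n) = fact n * fact n * ((2 * n) choose n :: nat)"
    using binomial_fact_lemma[of n "2 * n"] by (simp add: mult_2)
  then have "multiplicity p (fact (2 * n) :: nat)
      = 2 * multiplicity p (fact n :: nat) + multiplicity p ((2 * n) choose n)"
    using p by (simp add: prime_elem_multiplicity_mult_distrib)
  moreover have "(\<Sum>i\<in>{1..n}. n div p ^ i) = (\<Sum>i\<in>{1..2 * n}. n div p ^ i)"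
  proof (rule sum.mono_neutral_left)
    show "\<forall>i\<in>{1..2 * n} - {1..n}. n div p ^ i = 0"
    proof
      fix i
      assume "i \<in> {1..2 * n} - {1..n}"
      then have "n < i"
        by auto
      also have "i < p ^ i"
        by (rule less_power_self[OF prime_ge_2_nat[OF p]])
      finally show "n div p ^ i = 0"
        by simp
    qed
  qed auto
  moreover have "(\<Sum>i\<in>{1..2 * n}. (2 * n) div p ^ i)
      = (\<Sum>i\<in>{1..2 * n}. (2 * n) div p ^ i - 2 * (n div p ^ i)) + 2 * (\<Sum>i\<in>{1..2 * n}. n div p ^ i)"
    by (simp add: sum_distrib_left sum.distrib[symmetric] double_div_le)
  ultimately show ?thesis
    using multiplicity_fact[OF p, of n] multiplicity_fact[OF p, of "2 * n"] by simp
qed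

lemma prime_power_multiplicity_central_binomial_le:
  assumes p: "prime (p::nat)" and n: "0 < n"
  shows "p ^ multiplicity p ((2 * n) choose n) \<le> 2 * n"
proof (rule ccontr)
  define k where "k = multiplicity p ((2 * n) choose n)"
  assume "\<not> p ^ multiplicity p ((2 * n) choose n) \<le> 2 * n"
  then have big: "2 * n < p ^ k"
    by (simp add: k_def)
  have term_le: "(2 * n) div p ^ i - 2 * (n div p ^ i) \<le> (if i < k then 1 else 0)" for i
  proof (cases "i < k")
    case True
    then show ?thesis
      using div_double_le[of "p ^ i" n] prime_gt_0_nat[OF p] by simp
  next
    case False
    then have "p ^ k \<le> p ^ i"
      using prime_gt_0_nat[OF p] by (intro power_increasing) auto
    then show ?thesis
      using big False by simp
  qed
  have "k = (\<Sum>i\<in>{1..2 * n}. (2 * n) div p ^ i - 2 * (n div p ^ i))"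
    unfolding k_def by (rule multiplicity_central_binomial[OF p])
  also have "\<dots> \<le> (\<Sum>i\<in>{1..2 * n}. if i < k then 1 else 0)"
    by (intro sum_mono term_le)
  also have "\<dots> = card {i\<in>{1..2 * n}. i < k}"
    by (simp add: sum.inter_filter[symmetric])
  also have "\<dots> \<le> card {1..<k}"
    by (intro card_mono) auto
  finally have "k = 0"
    by simp
  then show False
    using big n by simp
qed

lemma central_binomial_le_power_card_primes:
  assumes n: "0 < n"
  shows "(2 * n) choose n \<le> (2 * n) ^ card {p. prime p \<and> p \<le> 2 * n}"
proof -
  define C where "C = (2 * n) choose n"
  have C: "0 < C"
    by (simp add: C_def)
  have "prime_factors C \<subseteq> {p. prime p \<and> p \<le> 2 * n}"
  proof
    fix p
    assume "p \<in> prime_factors C"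
    then have p: "prime p" "p dvd C"
      by (auto simp: in_prime_factors_iff)
    have "C dvd fact (2 * n)"
      using binomial_fact_lemma[of n "2 * n"] by (simp add: C_def mult_2) (metis dvd_triv_right)
    then show "p \<in> {p. prime p \<and> p \<le> 2 * n}"
      using p prime_dvd_fact_iff[OF p(1)] dvd_trans by blast
  qed
  then have "card (prime_factors C) \<le> card {p. prime p \<and> p \<le> 2 * n}"
    by (intro card_mono) auto
  have "C = (\<Prod>p\<in>prime_factors C. p ^ multiplicity p C)"
    using prime_factorization_nat[OF C] .
  also have "\<dots> \<le> (\<Prod>p\<in>prime_factors C. 2 * n)"
    using n by (intro prod_mono)
      (auto simp: C_def in_prime_factors_iff prime_power_multiplicity_central_binomial_le)
  also have "\<dots> = (2 * n) ^ card (prime_factors C)"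
    by simp
  also have "\<dots> \<le> (2 * n) ^ card {p. prime p \<and> p \<le> 2 * n}"
    using n \<open>card (prime_factors C) \<le> _\<close> by (intro power_increasing) auto
  finally show ?thesis
    by (simp add: C_def)
qed

lemma card_primes_atMost_le: "card {p. prime p \<and> p \<le> m} \<le> q + card (primes_between q m)"
proof -
  have "{p. prime p \<and> p \<le> m} \<subseteq> {1..q} \<union> primes_between q m"
    by (auto simp: primes_between_def dest: prime_ge_1_nat)
  then have "card {p. prime p \<and> p \<le> m} \<le> card ({1..q} \<union> primes_between q m)"
    by (intro card_mono) auto
  also have "\<dots> \<le> q + card (primes_between q m)"
    using card_Un_le[of "{1..q}"] by simp
  finally show ?thesis .
qed

text \<open>Chebyshev's argument: \<open>4\<^sup>n \<le> 2n \<cdot> C(2n, n) \<le> (2n)\<^bsup>\<pi>(2n) + 1\<^esup>\<close> with \<open>2n = tq\<close>, whereas fewer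
  than \<open>t\<^sup>2\<close> primes in \<open>(q, tq]\<close> would give \<open>\<pi>(tq) < 2q\<close>.\<close>
lemma card_primes_between_ge_square:
  fixes q t :: nat
  assumes "1 \<le> q" "1 \<le> t" "even (t * q)" "t\<^sup>2 \<le> q" "(t * q)\<^sup>2 < 2 ^ t"
  shows "t\<^sup>2 \<le> card (primes_between q (t * q))"
proof (rule ccontr)
  assume few: "\<not> t\<^sup>2 \<le> card (primes_between q (t * q))"
  obtain n where n2: "t * q = 2 * n"
    using assms(3) by auto
  have n: "0 < n"
    using n2 assms(1,2) by (metis mult_is_0 not_gr_zero not_one_le_zero)
  have "real (4 ^ n) \<le> real ((2 * n) * ((2 * n) choose n))"
    using central_binomial_lower_bound[OF n] n by (simp add: field_simps)
  then have "4 ^ n \<le> (2 * n) * ((2 * n) choose n)"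
    by linarith
  also have "\<dots> \<le> (2 * n) ^ (card {p. prime p \<and> p \<le> 2 * n} + 1)"
    using central_binomial_le_power_card_primes[OF n] by simp
  also have "\<dots> \<le> (2 * n) ^ (2 * q)"
    using card_primes_atMost_le[of "2 * n" q] few assms(4) n n2
    by (intro power_increasing) auto
  also have "\<dots> = ((t * q)\<^sup>2) ^ q"
    using n2 by (simp add: power_mult)
  also have "\<dots> < (2 ^ t) ^ q"
    using assms(1,5) by (intro power_strict_mono) auto
  also have "\<dots> = 4 ^ n"
    unfolding power_mult[symmetric] n2 by (simp add: power_mult)
  finally show False
    by simp
qed

lemma square_le_power_of_two: "12 \<le> L \<Longrightarrow> 16 * (L + 1)\<^sup>2 \<le> (2::nat) ^ L"
proof (induction L rule: dec_induct)
  case (step L)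
  have "12 * 12 \<le> L * L"
    using step(1) by (intro mult_le_mono) auto
  then have "16 * (Suc L + 1)\<^sup>2 \<le> 2 * (16 * (L + 1)\<^sup>2)"
    by (simp add: power2_eq_square algebra_simps)
  also have "\<dots> \<le> 2 * 2 ^ L"
    using step(3) by simp
  finally show ?case
    by simp
qed simp

lemma ex_card_primes_between_ge_square:
  assumes q: "4096 \<le> q"
  shows "\<exists>t\<ge>1. t\<^sup>2 \<le> card (primes_between q (t * q))"
proof -
  obtain L where L: "2 ^ L \<le> q" "q < 2 ^ (L + 1)"
    using ex_power_ivl1[of 2 q] q by auto
  have "(2::nat) ^ 12 < 2 ^ (L + 1)"
    using L q by simp
  then have "12 \<le> L"
    by (subst (asm) power_strict_increasing_iff) auto
  define t where "t = 4 * (L + 1)"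
  have t2: "t\<^sup>2 = 16 * (L + 1)\<^sup>2"
    by (simp add: t_def power2_eq_square algebra_simps)
  have L2: "16 * (L + 1)\<^sup>2 \<le> 2 ^ L"
    using \<open>12 \<le> L\<close> by (rule square_le_power_of_two)
  have "(t * q)\<^sup>2 < (t * 2 ^ (L + 1))\<^sup>2"
    using L t_def by (intro power_strict_mono) auto
  also have "\<dots> = t\<^sup>2 * 4 ^ (L + 1)"
    by (simp add: power_mult_distrib power_mult[symmetric] mult.commute[of _ 2] power_mult)
  also have "\<dots> \<le> 4 ^ (L + 1) * 4 ^ (L + 1)"
    unfolding t2 using L2 power_mono[of "2::nat" 4 L] by (intro mult_right_mono) auto
  also have "\<dots> = 2 ^ t"
    unfolding t_def power_mult power_mult_distrib[symmetric] by simp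
  finally have "(t * q)\<^sup>2 < 2 ^ t" .
  moreover have "t\<^sup>2 \<le> q"
    using t2 L2 L by linarith
  ultimately show ?thesis
    using q by (intro exI[of _ t]) (auto simp: t_def intro!: card_primes_between_ge_square)
qed

text \<open>If five consecutive entries \<open>a < b < c < d < e\<close> of a list of primes satisfy \<open>e \<le> 2a\<close>,
  then \<open>b, c, d, e\<close> lie in \<open>(q, 2q]\<close> for every \<open>q \<in> [a, b)\<close>.\<close>
fun doubling_chain :: "nat list \<Rightarrow> bool" where
  "doubling_chain (a # b # c # d # e # rest) =
     (a < b \<and> b < c \<and> c < d \<and> d < e \<and> e \<le> 2 * a \<and> doubling_chain (b # c # d # e # rest))"
| "doubling_chain _ = True"

lemma four_le_card_primes_between_if_doubling_chain:
  "doubling_chain L \<Longrightarrow> list_all prime L \<Longrightarrow> 5 \<le> length L \<Longrightarrow> hd L \<le> q \<Longrightarrow>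
    q < L ! (length L - 4) \<Longrightarrow> 4 \<le> card (primes_between q (2 * q))"
proof (induction L rule: doubling_chain.induct)
  case (1 a b c d e rest)
  show ?case
  proof (cases "q < b")
    case True
    have "{b, c, d, e} \<subseteq> primes_between q (2 * q)"
      using 1(2-5) True by (auto simp: primes_between_def)
    moreover have "card {b, c, d, e} = 4"
      using 1(2) by auto
    ultimately show ?thesis
      by (metis card_mono finite_primes_between)
  next
    case False
    with 1(6) have "rest \<noteq> []"
      by auto
    then show ?thesis
      using 1 False by (cases rest) auto
  qed
qed auto

definition bertrand_chain :: "nat list" where
  "bertrand_chain = [17, 19, 23, 29, 31, 37, 43, 53, 61, 73, 83, 103, 113, 139, 163, 199, 223, 277,
     317, 397, 443, 547, 631, 787, 883, 1093, 1259, 1571, 1759, 2179, 2503, 3137, 3517, 4357, 5003,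
     6271, 7027, 8713]"

lemma four_le_card_primes_between_double:
  assumes "17 \<le> q" "q < 4096"
  shows "4 \<le> card (primes_between q (2 * q))"
proof (rule four_le_card_primes_between_if_doubling_chain)
  show "list_all prime bertrand_chain"
    by (simp add: bertrand_chain_def prime_iff_no_divisor_from no_divisor_from.simps)
qed (use assms in \<open>simp_all add: bertrand_chain_def\<close>)

lemma one_le_sum_square_ratios:
  fixes q t :: nat
  assumes "1 \<le> q" "1 \<le> t" "t\<^sup>2 \<le> card (primes_between q (t * q))"
  shows "1 \<le> (\<Sum>p\<in>primes_between q (t * q). (real q / real p)\<^sup>2)"
proof -
  have "1 \<le> real (card (primes_between q (t * q))) / real t ^ 2"
    using assms by (simp add: field_simps flip: of_nat_power)
  also have "\<dots> = (\<Sum>p\<in>primes_between q (t * q). (1 / real t)\<^sup>2)"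
    by (simp add: power_divide)
  also have "\<dots> \<le> (\<Sum>p\<in>primes_between q (t * q). (real q / real p)\<^sup>2)"
  proof (intro sum_mono power_mono)
    fix p
    assume "p \<in> primes_between q (t * q)"
    then have "q < p" "p \<le> t * q"
      by (auto simp: primes_between_def)
    then show "1 / real t \<le> real q / real p"
      using assms by (simp add: field_simps) (metis of_nat_le_iff of_nat_mult mult.commute)
  qed simp
  finally show ?thesis .
qed

lemma ex_primes_above_square_ratio_sum_ge_1:
  assumes q: "prime q" "5 \<le> q"
  shows "\<exists>F. finite F \<and> (\<forall>p\<in>F. prime p \<and> q < p) \<and> 1 \<le> (\<Sum>p\<in>F. (real q / real p)\<^sup>2)"
proof -
  have from_count: ?thesis if "1 \<le> t" "t\<^sup>2 \<le> card (primes_between q (t * q))" for t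
    using that q one_le_sum_square_ratios[of q t]
    by (intro exI[of _ "primes_between q (t * q)"]) (auto simp: primes_between_def)
  consider "4096 \<le> q" | "17 \<le> q" "q < 4096" | "q < 17"
    by linarith
  then show ?thesis
  proof cases
    case 1
    then show ?thesis
      using ex_card_primes_between_ge_square from_count by blast
  next
    case 2
    then show ?thesis
      using four_le_card_primes_between_double from_count[of 2] by simp
  next
    case 3
    then have "q = 5 \<or> q = 6 \<or> q = 7 \<or> q = 8 \<or> q = 9 \<or> q = 10 \<or> q = 11 \<or> q = 12 \<or>
        q = 13 \<or> q = 14 \<or> q = 15 \<or> q = 16"
      using q(2) by presburger
    then consider "q = 5" | "q = 7" | "q = 11" | "q = 13"
      using q(1) by (auto simp: prime_iff_no_divisor_from no_divisor_from.simps)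
    then show ?thesis
    proof cases
      case 1
      then show ?thesis
        by (intro exI[of _ "{7, 11, 13, 17, 19, 23, 29, 31, 37, 41, 43, 47}"])
          (simp add: prime_iff_no_divisor_from no_divisor_from.simps power_divide)
    next
      case 2
      then show ?thesis
        by (intro exI[of _ "{11, 13, 17, 19, 23}"])
          (simp add: prime_iff_no_divisor_from no_divisor_from.simps power_divide)
    next
      case 3
      then show ?thesis
        by (intro exI[of _ "{13, 17, 19}"])
          (simp add: prime_iff_no_divisor_from no_divisor_from.simps power_divide)
    next
      case 4
      then show ?thesis
        by (intro exI[of _ "{17, 19, 23, 29}"])
          (simp add: prime_iff_no_divisor_from no_divisor_from.simps power_divide)
    qed
  qed
qed

section \<open>The key inequality\<close>

lemma not_mighty_if_ge_5:
  assumes "1 < r" "r \<le> 2" "prime q" "5 \<le> q"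
  shows "\<not> mighty r q"
proof
  assume "mighty r q"
  obtain F where F: "finite F" "\<forall>p\<in>F. prime p \<and> q < p" "1 \<le> (\<Sum>p\<in>F. (real q / real p)\<^sup>2)"
    using ex_primes_above_square_ratio_sum_ge_1[OF assms(3,4)] by blast
  have "(\<Sum>p\<in>F. (real q / real p) powr 2) < 1"
    using assms(1,2) \<open>mighty r q\<close> F(1,2) by (intro mighty_weighted_sum_less) auto
  with F(3) show False
    by simp
qed

lemma powr_three_halves: "0 \<le> x \<Longrightarrow> x powr (3 / 2) = x * sqrt x"
  for x :: real
  using powr_add[of x 1 "1 / 2"] by (cases "x = 0") (simp_all add: powr_half_sqrt)

lemma powr_three_halves_le: "0 \<le> c \<Longrightarrow> 0 \<le> x \<Longrightarrow> x \<le> c\<^sup>2 \<Longrightarrow> x powr (3 / 2) \<le> x * c"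
  for x c :: real
  by (simp add: powr_three_halves mult_left_mono real_le_lsqrt)

lemma powr_three_halves_ge: "0 \<le> c \<Longrightarrow> c\<^sup>2 \<le> x \<Longrightarrow> x * c \<le> x powr (3 / 2)"
  for x c :: real
  using order_trans[OF zero_le_power2, of c x]
  by (simp add: powr_three_halves mult_left_mono real_le_rsqrt)

lemma not_mighty_2:
  assumes "1 < r" "r \<le> 3 / 2"
  shows "\<not> mighty r 2"
proof
  assume "mighty r 2"
  moreover have "list_all prime [3, 5, 7, 11, 13::nat]"
    by (simp add: prime_iff_no_divisor_from no_divisor_from.simps)
  ultimately have "(\<Sum>p\<in>{3, 5, 7, 11, 13}. (real 2 / real p) powr (3 / 2)) < 1"
    using assms by (intro mighty_weighted_sum_less) auto
  moreover have "2/3 * (81/100) \<le> (2/3::real) powr (3/2)" "2/5 * (63/100) \<le> (2/5::real) powr (3/2)"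
    "2/7 * (53/100) \<le> (2/7::real) powr (3/2)" "2/11 * (42/100) \<le> (2/11::real) powr (3/2)"
    "2/13 * (39/100) \<le> (2/13::real) powr (3/2)"
    by (rule powr_three_halves_ge; simp add: power2_eq_square)+
  ultimately show False
    by simp
qed

lemma not_mighty_3:
  assumes "1 < r" "r \<le> 3 / 2"
  shows "\<not> mighty r 3"
proof
  assume "mighty r 3"
  moreover have "list_all prime [5, 7, 11, 13, 17, 19, 23::nat]"
    by (simp add: prime_iff_no_divisor_from no_divisor_from.simps)
  ultimately have "(\<Sum>p\<in>{5, 7, 11, 13, 17, 19, 23}. (real 3 / real p) powr (3 / 2)) < 1"
    using assms by (intro mighty_weighted_sum_less) auto
  moreover have "3/5 * (77/100) \<le> (3/5::real) powr (3/2)" "3/7 * (65/100) \<le> (3/7::real) powr (3/2)"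
    "3/11 * (52/100) \<le> (3/11::real) powr (3/2)" "3/13 * (48/100) \<le> (3/13::real) powr (3/2)"
    "3/17 * (42/100) \<le> (3/17::real) powr (3/2)" "3/19 * (39/100) \<le> (3/19::real) powr (3/2)"
    "3/23 * (36/100) \<le> (3/23::real) powr (3/2)"
    by (rule powr_three_halves_ge; simp add: power2_eq_square)+
  ultimately show False
    by simp
qed

lemma mighty_exponent_less_2:
  assumes "1 < r" "r < 2" "mighty r q"
  shows "(q = 2 \<or> q = 3) \<and> 3 / 2 < r"
proof -
  have "prime q"
    using mighty_imp_eq_pr[OF assms(3)] prime_pr by blast
  moreover have "\<not> prime (4::nat)"
    by (simp add: prime_iff_no_divisor_from no_divisor_from.simps)
  ultimately have "q = 2 \<or> q = 3 \<or> 5 \<le> q"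
    using prime_ge_2_nat[of q] by (cases "q = 4") auto
  moreover have "3 / 2 < r"
    using assms not_mighty_2[of r] not_mighty_3[of r] not_mighty_if_ge_5[of r q] \<open>prime q\<close> calculation
    by fastforce
  ultimately show ?thesis
    using assms not_mighty_if_ge_5[of r q] \<open>prime q\<close> by auto
qed

text \<open>Multiplied by \<open>b\<^sup>r Q\<^bsup>2r\<^esup>\<close>, the claim reads \<open>(Q\<^sup>2/b)\<^sup>r + (Q/b)\<^sup>r \<le> 1\<close>; as both ratios are at
  most 1, it suffices to check this for a smaller exponent \<open>e\<close>.\<close>
lemma powr_key_inequality:
  fixes Q b r e :: real
  assumes Q: "1 \<le> Q" and b: "Q\<^sup>2 \<le> b" and e: "0 \<le> e" "e \<le> r"
    and sum_le: "(Q\<^sup>2 / b) powr e + (Q / b) powr e \<le> 1"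
  shows "b powr - r * (1 + Q powr - r) \<le> (Q powr - r)\<^sup>2"
proof -
  have "Q \<le> Q\<^sup>2"
    using mult_left_mono[OF Q, of Q] Q by (simp add: power2_eq_square)
  then have b0: "0 < b" and Qb: "Q \<le> b"
    using b Q by linarith+
  define a where "a = Q powr r"
  define c where "c = b powr r"
  have a: "0 < a" and c: "0 < c"
    using Q b0 by (auto simp: a_def c_def)
  have "(Q\<^sup>2 / b) powr r \<le> (Q\<^sup>2 / b) powr e"
    using b b0 e by (intro powr_mono') (auto simp: field_simps)
  moreover have "(Q / b) powr r \<le> (Q / b) powr e"
    using Qb b0 Q e by (intro powr_mono') (auto simp: field_simps)
  moreover have "(Q\<^sup>2 / b) powr r = a * a / c" "(Q / b) powr r = a / c"
    using Q b0 by (simp_all add: a_def c_def powr_divide powr_mult power2_eq_square)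
  ultimately have "a * a / c + a / c \<le> 1"
    using sum_le by linarith
  then have ac: "a * (a + 1) \<le> c"
    using c by (simp add: field_simps)
  have "1 / c * (1 + 1 / a) = (a + 1) / (a * c)"
    using a c by (simp add: field_simps)
  also have "\<dots> \<le> (a + 1) / (a * (a * (a + 1)))"
    using a c ac by (intro divide_left_mono mult_left_mono mult_pos_pos) auto
  also have "\<dots> = (1 / a)\<^sup>2"
    using a by (simp add: power2_eq_square)
  finally show ?thesis
    by (simp add: a_def c_def powr_minus_divide)
qed

lemma mighty_key_inequality:
  assumes r: "1 < r" and q: "mighty r q" and p: "prime p" and qp: "q\<^sup>2 < p"
  shows "real p powr - r * (1 + real q powr - r) \<le> (real q powr - r)\<^sup>2"
proof -
  have "prime q"
    using mighty_imp_eq_pr[OF q] prime_pr by blast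
  define Q where "Q = real q"
  have Q: "1 \<le> Q"
    using prime_ge_1_nat[OF \<open>prime q\<close>] by (simp add: Q_def)
  have via_bound: "real p powr - r * (1 + Q powr - r) \<le> (Q powr - r)\<^sup>2"
    if "Q\<^sup>2 \<le> b" "b \<le> real p" "0 \<le> e" "e \<le> r" "(Q\<^sup>2 / b) powr e + (Q / b) powr e \<le> 1" for b e
  proof -
    have "1 \<le> b"
      using that(1) one_le_power[OF Q, of 2] by linarith
    then have "real p powr - r * (1 + Q powr - r) \<le> b powr - r * (1 + Q powr - r)"
      using that r by (intro mult_right_mono powr_mono2' add_nonneg_nonneg) auto
    also have "\<dots> \<le> (Q powr - r)\<^sup>2"
      using that Q by (intro powr_key_inequality) auto
    finally show ?thesis .
  qed
  have "real p powr - r * (1 + Q powr - r) \<le> (Q powr - r)\<^sup>2"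
  proof (cases "2 \<le> r")
    case True
    define d where "d = Q\<^sup>2 + 1"
    have d: "0 < d"
      unfolding d_def by (simp add: add_nonneg_pos)
    have "d \<le> real p"
      using qp by (simp add: d_def Q_def flip: of_nat_power)
    have "(Q\<^sup>2 / d)\<^sup>2 + (Q / d)\<^sup>2 = ((Q\<^sup>2)\<^sup>2 + Q\<^sup>2) / d\<^sup>2"
      by (simp add: power_divide add_divide_distrib)
    also have "(Q\<^sup>2)\<^sup>2 + Q\<^sup>2 = Q\<^sup>2 * d"
      by (simp add: d_def algebra_simps power2_eq_square)
    also have "Q\<^sup>2 * d / d\<^sup>2 = Q\<^sup>2 / d"
      using d by (simp add: power2_eq_square)
    also have "\<dots> \<le> 1"
      using d by (simp add: d_def)
    finally show ?thesis
      using True Q d \<open>d \<le> real p\<close> by (intro via_bound[of d 2]) (auto simp: d_def)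
  next
    case False
    with r q have "q = 2 \<or> q = 3" "3 / 2 < r"
      using mighty_exponent_less_2 by auto
    moreover have "\<not> prime (10::nat)"
      by (simp add: prime_iff_no_divisor_from no_divisor_from.simps)
    ultimately consider "q = 2" "5 \<le> p" | "q = 3" "11 \<le> p"
      using qp p by (cases "p = 10") auto
    then show ?thesis
    proof cases
      case 1
      have "(4/5::real) powr (3/2) \<le> 4/5 * (9/10)" "(2/5::real) powr (3/2) \<le> 2/5 * (16/25)"
        by (rule powr_three_halves_le; simp add: power2_eq_square)+
      then show ?thesis
        using 1 \<open>3 / 2 < r\<close> by (intro via_bound[of 5 "3 / 2"]) (auto simp: Q_def)
    next
      case 2
      have "(9/11::real) powr (3/2) \<le> 9/11 * (91/100)" "(3/11::real) powr (3/2) \<le> 3/11 * (53/100)"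
        by (rule powr_three_halves_le; simp add: power2_eq_square)+
      then show ?thesis
        using 2 \<open>3 / 2 < r\<close> by (intro via_bound[of 11 "3 / 2"]) (auto simp: Q_def)
    qed
  qed
  then show ?thesis
    by (simp add: Q_def)
qed

section \<open>The gap\<close>

lemma euler_factor_eq_linear: "\<alpha> (pr k) = 1 \<Longrightarrow> euler_factor r \<alpha> k = 1 + real (pr k) powr - r"
  using pr_gt_1[of k] by (simp add: euler_factor_def sigma_pp_one)

lemma one_plus_powr_mult_le_smaller_prime:
  fixes a q p :: nat
  assumes a: "2 \<le> a" "a < q" and qp: "q\<^sup>2 < p" and r: "1 < r"
  shows "(1 + real q powr - r) * (1 + real p powr - r) \<le> 1 + real a powr - r"
proof -
  define Q where "Q = real q"
  define y where "y = Q powr - r"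
  define P where "P = real p powr - r"
  have Q3: "3 \<le> Q" and y0: "0 \<le> y"
    using a by (simp_all add: Q_def y_def)
  have "P \<le> (Q\<^sup>2) powr - r"
    unfolding P_def using qp Q3 r by (intro powr_mono2') (auto simp: Q_def simp flip: of_nat_power)
  also have "(Q\<^sup>2) powr - r = y\<^sup>2"
    using Q3 by (simp add: y_def power2_eq_square powr_mult)
  finally have Py: "P \<le> y\<^sup>2" .
  have "y \<le> Q powr - 1"
    unfolding y_def using Q3 r by (intro powr_mono) auto
  then have "y \<le> 1 / Q"
    using Q3 by (simp add: powr_minus_divide)
  then have "y + y\<^sup>2 \<le> 1 / Q + (1 / Q)\<^sup>2"
    using y0 by (intro add_mono power_mono) auto
  also have "\<dots> \<le> 1 / (Q - 1)"
    using Q3 by (simp add: field_simps power2_eq_square)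
  finally have yy: "y + y\<^sup>2 \<le> 1 / (Q - 1)" .
  have "Q / (Q - 1) \<le> (Q / (Q - 1)) powr r"
    using powr_mono[of 1 r "Q / (Q - 1)"] Q3 r by (simp add: field_simps)
  then have "y * (Q / (Q - 1)) \<le> y * (Q / (Q - 1)) powr r"
    using y0 by (rule mult_left_mono)
  also have "\<dots> = (Q - 1) powr - r"
    using Q3 by (simp add: y_def powr_divide powr_minus_divide)
  also have "\<dots> \<le> real a powr - r"
    using a r by (intro powr_mono2') (auto simp: Q_def)
  finally have ay: "y * (Q / (Q - 1)) \<le> real a powr - r" .
  have "(1 + y) * (1 + P) \<le> (1 + y) * (1 + y\<^sup>2)"
    using Py y0 by (intro mult_left_mono) auto
  also have "\<dots> = 1 + y * (1 + (y + y\<^sup>2))"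
    by (simp add: algebra_simps power2_eq_square)
  also have "\<dots> \<le> 1 + y * (1 + 1 / (Q - 1))"
    using yy y0 by (intro add_left_mono mult_left_mono) auto
  also have "1 + 1 / (Q - 1) = Q / (Q - 1)"
    using Q3 by (simp add: field_simps)
  finally show ?thesis
    using ay by (simp add: y_def P_def Q_def)
qed

lemma gap_upper_end:
  assumes r: "1 < r" and jM: "j < M" and sq: "(pr j)\<^sup>2 < pr M"
    and key: "real (pr M) powr - r * (1 + real (pr j) powr - r) \<le> (real (pr j) powr - r)\<^sup>2"
    and \<alpha>: "(\<exists>k<j. \<alpha> (pr k) \<noteq> 0) \<or> 2 \<le> \<alpha> (pr j) \<or>
      (\<alpha> (pr j) \<noteq> 0 \<and> (\<exists>k. j < k \<and> k \<le> M \<and> \<alpha> (pr k) \<noteq> 0))"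
  shows "(1 + real (pr j) powr - r) * (1 + real (pr M) powr - r) \<le> sigma_st r \<alpha>"
proof -
  define y where "y = real (pr j) powr - r"
  define P where "P = real (pr M) powr - r"
  have y0: "0 \<le> y"
    by (simp add: y_def)
  have factor_ge: "1 + real (pr k) powr - r \<le> euler_factor r \<alpha> k" if "\<alpha> (pr k) \<noteq> 0" for k
    using r that pr_gt_1 by (simp add: euler_factor_def sigma_pp_ge_linear)
  have single: "euler_factor r \<alpha> k \<le> sigma_st r \<alpha>" for k
    using prod_le_sigma_st[OF r, of "{k}"] by simp
  from \<alpha> consider k where "k < j" "\<alpha> (pr k) \<noteq> 0" | "2 \<le> \<alpha> (pr j)"
    | k where "\<alpha> (pr j) \<noteq> 0" "j < k" "k \<le> M" "\<alpha> (pr k) \<noteq> 0"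
    by blast
  then show ?thesis
  proof cases
    case (1 k)
    have "(1 + y) * (1 + P) \<le> 1 + real (pr k) powr - r"
      unfolding y_def P_def using 1 r sq pr_ge[of k] strict_mono_less[OF strict_mono_pr]
      by (intro one_plus_powr_mult_le_smaller_prime) auto
    then show ?thesis
      using factor_ge[OF 1(2)] single[of k] by (simp add: y_def P_def)
  next
    case 2
    have "(1 + y) * (1 + P) \<le> 1 + y + y\<^sup>2"
      using key by (simp add: y_def P_def algebra_simps)
    also have "\<dots> \<le> euler_factor r \<alpha> j"
      using 2 r pr_gt_1 by (simp add: y_def euler_factor_def sigma_pp_ge_quadratic)
    finally show ?thesis
      using single[of j] by (simp add: y_def P_def)
  next
    case (3 k)
    have "P \<le> real (pr k) powr - r"
      unfolding P_def using 3 r prime_gt_0_nat[OF prime_pr] strict_mono_less_eq[OF strict_mono_pr]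
      by (intro powr_mono2') auto
    then have "1 + P \<le> euler_factor r \<alpha> k"
      using factor_ge[OF 3(4)] by linarith
    moreover have "1 + y \<le> euler_factor r \<alpha> j"
      using factor_ge[OF 3(1)] by (simp add: y_def)
    ultimately have "(1 + y) * (1 + P) \<le> euler_factor r \<alpha> j * euler_factor r \<alpha> k"
      using y0 by (intro mult_mono) (auto simp: P_def)
    also have "\<dots> \<le> sigma_st r \<alpha>"
      using prod_le_sigma_st[OF r, of "{j, k}" \<alpha>] 3(2) by simp
    finally show ?thesis
      by (simp add: y_def P_def)
  qed
qed

lemma gap_lower_end:
  assumes r: "1 < r" and jM: "j \<le> M" and mighty: "mighty r (pr j)"
    and below: "\<And>k. k < j \<Longrightarrow> \<alpha> (pr k) = 0"
    and \<alpha>: "\<alpha> (pr j) = 0 \<or> \<alpha> (pr j) = 1 \<and> (\<forall>k. j < k \<and> k \<le> M \<longrightarrow> \<alpha> (pr k) = 0)"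
  shows "sigma_st r \<alpha> \<le> (1 + real (pr j) powr - r) * u_tail (Suc M) r"
  using \<alpha>
proof
  assume "\<alpha> (pr j) = 0"
  then have "(\<Prod>k<Suc j. euler_factor r \<alpha> k) = 1"
    using below by (intro prod.neutral) (auto simp: less_Suc_eq euler_factor_eq_1)
  then have "sigma_st r \<alpha> \<le> u_tail (Suc j) r"
    using sigma_st_le_u_tail_times_prefix[OF r, of \<alpha> "Suc j"] by simp
  also have "\<dots> < 1 + real (pr j) powr - r"
    using mighty by (simp add: mighty_pr_iff)
  also have "\<dots> \<le> (1 + real (pr j) powr - r) * u_tail (Suc M) r"
    using mult_left_mono[OF u_tail_ge_1[OF r], of "1 + real (pr j) powr - r" "Suc M"]
    by (simp add: add_nonneg_nonneg)
  finally show ?thesis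
    by simp
next
  assume one: "\<alpha> (pr j) = 1 \<and> (\<forall>k. j < k \<and> k \<le> M \<longrightarrow> \<alpha> (pr k) = 0)"
  have "(\<Prod>k<Suc M. euler_factor r \<alpha> k) = (\<Prod>k\<in>{j}. euler_factor r \<alpha> k)"
  proof (rule prod_euler_factor_eq_support)
    show "{j} \<subseteq> {..<Suc M}"
      using jM by simp
    fix k
    assume "k < Suc M" "k \<notin> {j}"
    then have "k < j \<or> j < k \<and> k \<le> M"
      by auto
    then show "\<alpha> (pr k) = 0"
      using below one by blast
  qed
  then show ?thesis
    using sigma_st_le_u_tail_times_prefix[OF r, of \<alpha> "Suc M"] one
    by (simp add: euler_factor_eq_linear mult.commute)
qed

lemma sigma_st_outside_gap:
  assumes r: "1 < r" and jM: "j < M" and mighty: "mighty r (pr j)" and sq: "(pr j)\<^sup>2 < pr M"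
  shows "sigma_st r \<alpha> \<le> (1 + real (pr j) powr - r) * u_tail (Suc M) r
      \<or> (1 + real (pr j) powr - r) * (1 + real (pr M) powr - r) \<le> sigma_st r \<alpha>"
proof (cases "(\<exists>k<j. \<alpha> (pr k) \<noteq> 0) \<or> 2 \<le> \<alpha> (pr j) \<or>
    (\<alpha> (pr j) \<noteq> 0 \<and> (\<exists>k. j < k \<and> k \<le> M \<and> \<alpha> (pr k) \<noteq> 0))")
  case True
  then show ?thesis
    using gap_upper_end[of r j M, OF r jM sq mighty_key_inequality[OF r mighty prime_pr sq]] by blast
next
  case False
  then have below: "\<And>k. k < j \<Longrightarrow> \<alpha> (pr k) = 0"
    and "\<not> 2 \<le> \<alpha> (pr j)" "\<alpha> (pr j) \<noteq> 0 \<Longrightarrow> \<forall>k. j < k \<and> k \<le> M \<longrightarrow> \<alpha> (pr k) = 0"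
    by auto
  moreover have "\<alpha> (pr j) \<noteq> 0 \<Longrightarrow> \<not> 2 \<le> \<alpha> (pr j) \<Longrightarrow> \<alpha> (pr j) = 1"
    by (cases "\<alpha> (pr j)") (auto simp: one_enat_def zero_enat_def numeral_eq_enat)
  ultimately have "\<alpha> (pr j) = 0 \<or> \<alpha> (pr j) = 1 \<and> (\<forall>k. j < k \<and> k \<le> M \<longrightarrow> \<alpha> (pr k) = 0)"
    by blast
  then show ?thesis
    using gap_lower_end[of r j M \<alpha>, OF r less_imp_le[OF jM] mighty below] by blast
qed

text \<open>Exponents of the Steinitz numbers \<open>q \<cdot> \<Prod>\<^bsub>p' > p\<^esub> p'\<^sup>\<infinity>\<close> and \<open>q \<cdot> p\<close>, which attain the
  two ends of the gap.\<close>
definition left_end_exponents :: "nat \<Rightarrow> nat \<Rightarrow> nat \<Rightarrow> enat" where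
  "left_end_exponents q p n = (if n = q then 1 else if prime n \<and> p < n then \<infinity> else 0)"

definition right_end_exponents :: "nat \<Rightarrow> nat \<Rightarrow> nat \<Rightarrow> enat" where
  "right_end_exponents q p n = (if n = q \<or> n = p then 1 else 0)"

lemma left_end_exponents_steinitz: "prime q \<Longrightarrow> left_end_exponents q p \<in> steinitz"
  by (auto simp: steinitz_def left_end_exponents_def)

lemma right_end_exponents_steinitz: "prime q \<Longrightarrow> prime p \<Longrightarrow> right_end_exponents q p \<in> steinitz"
  by (auto simp: steinitz_def right_end_exponents_def)

lemma sigma_st_left_end:
  assumes r: "1 < r" and jM: "j < M"
  shows "sigma_st r (left_end_exponents (pr j) (pr M)) = (1 + real (pr j) powr - r) * u_tail (Suc M) r"
proof -
  define \<alpha> where "\<alpha> = left_end_exponents (pr j) (pr M)"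
  have "euler_factor r \<alpha> (k + Suc M) = euler_factor r (\<lambda>_. \<infinity>) (k + Suc M)" for k
  proof -
    have "pr j < pr (k + Suc M)" "pr M < pr (k + Suc M)"
      using jM strict_mono_less[OF strict_mono_pr] by auto
    then show ?thesis
      by (simp add: \<alpha>_def euler_factor_def left_end_exponents_def prime_pr)
  qed
  then have "(\<Prod>k. euler_factor r \<alpha> (k + Suc M)) = u_tail (Suc M) r"
    by (simp add: u_tail_eq_prodinf)
  moreover have "(\<Prod>k<Suc M. euler_factor r \<alpha> k) = (\<Prod>k\<in>{j}. euler_factor r \<alpha> k)"
    using jM strict_mono_eq[OF strict_mono_pr] strict_mono_less[OF strict_mono_pr]
    by (intro prod_euler_factor_eq_support) (auto simp: \<alpha>_def left_end_exponents_def)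
  ultimately show ?thesis
    using sigma_st_split[OF r, of \<alpha> "Suc M"]
    by (simp add: \<alpha>_def euler_factor_eq_linear left_end_exponents_def mult.commute)
qed

lemma sigma_st_right_end:
  assumes r: "1 < r" and jM: "j < M"
  shows "sigma_st r (right_end_exponents (pr j) (pr M))
    = (1 + real (pr j) powr - r) * (1 + real (pr M) powr - r)"
proof -
  define \<alpha> where "\<alpha> = right_end_exponents (pr j) (pr M)"
  have "\<alpha> (pr (k + Suc M)) = 0" for k
    using jM strict_mono_eq[OF strict_mono_pr] by (simp add: \<alpha>_def right_end_exponents_def)
  then have "(\<Prod>k. euler_factor r \<alpha> (k + Suc M)) = 1"
    by (simp add: euler_factor_eq_1)
  moreover have "(\<Prod>k<Suc M. euler_factor r \<alpha> k) = (\<Prod>k\<in>{j, M}. euler_factor r \<alpha> k)"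
    using jM strict_mono_eq[OF strict_mono_pr]
    by (intro prod_euler_factor_eq_support) (auto simp: \<alpha>_def right_end_exponents_def)
  ultimately show ?thesis
    using sigma_st_split[OF r, of \<alpha> "Suc M"] jM strict_mono_eq[OF strict_mono_pr, of j M]
    by (simp add: \<alpha>_def euler_factor_eq_linear right_end_exponents_def)
qed

lemma sigma_nat_prime:
  assumes "prime q"
  shows "sigma_nat r q = 1 + real q powr - r"
proof -
  have "{d. d dvd q} = {1, q}" "q \<noteq> 1"
    using assms by (auto simp: prime_nat_iff)
  then show ?thesis
    by (simp add: sigma_nat_def)
qed

lemma sigma_nat_mult_primes:
  assumes q: "prime q" and p: "prime p" and qp: "q \<noteq> p"
  shows "sigma_nat r (q * p) = (1 + real q powr - r) * (1 + real p powr - r)"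
proof -
  have "{d. d dvd q * p} = {1, q, p, q * p}"
  proof
    show "{d. d dvd q * p} \<subseteq> {1, q, p, q * p}"
    proof
      fix d
      assume "d \<in> {d. d dvd q * p}"
      then obtain b c where d: "d = b * c" "b dvd q" "c dvd p"
        using division_decomp by blast
      moreover have "b = 1 \<or> b = q" "c = 1 \<or> c = p"
        using d q p by (auto simp: prime_nat_iff)
      ultimately show "d \<in> {1, q, p, q * p}"
        by auto
    qed
  qed auto
  moreover have "1 < q" "1 < p"
    using q p prime_gt_1_nat by auto
  ultimately show ?thesis
    unfolding sigma_nat_def using qp by (simp add: powr_mult algebra_simps)
qed

lemma interval_in_components:
  fixes S :: "real set"
  assumes ab: "a < b" "a \<in> S" "b \<in> S" and outside: "\<And>x. x \<in> S \<Longrightarrow> x \<le> a \<or> b \<le> x"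
  shows "{a<..<b} \<in> components (UNIV - S)"
  unfolding in_components_maximal
proof (intro conjI allI impI)
  show "{a<..<b} \<noteq> {}" "{a<..<b} \<subseteq> UNIV - S" "connected {a<..<b}"
    using ab outside by force+
  fix D
  assume D: "D \<noteq> {} \<and> {a<..<b} \<subseteq> D \<and> D \<subseteq> UNIV - S \<and> connected D"
  have "(a + b) / 2 \<in> {a<..<b}"
    using ab by simp
  then have mid: "(a + b) / 2 \<in> D"
    using D by blast
  have interval: "\<And>x y z. x \<in> D \<Longrightarrow> y \<in> D \<Longrightarrow> x \<le> z \<Longrightarrow> z \<le> y \<Longrightarrow> z \<in> D"
    using D unfolding connected_iff_interval by blast
  have "a \<notin> D" "b \<notin> D"
    using D ab by auto
  then have "x \<in> {a<..<b}" if "x \<in> D" for x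
    using interval[OF that mid, of a] interval[OF mid that, of b] ab by force
  then show "D = {a<..<b}"
    using D by auto
qed

lemma gap_of_sigma_st:
  assumes r: "1 < r" and mighty_j: "mighty r (pr j)" and mighty_M: "mighty r (pr M)"
    and sq: "(pr j)\<^sup>2 < pr M"
  shows "{(1 + real (pr j) powr - r) * u_tail (Suc M) r <..<
      (1 + real (pr j) powr - r) * (1 + real (pr M) powr - r)} \<in> components (UNIV - sigma_st r ` steinitz)"
proof (rule interval_in_components)
  have jM: "j < M"
    using le_less_trans[OF le_square sq[unfolded power2_eq_square]] strict_mono_less[OF strict_mono_pr]
    by simp
  show "(1 + real (pr j) powr - r) * u_tail (Suc M) r < (1 + real (pr j) powr - r) * (1 + real (pr M) powr - r)"
    using mighty_M by (simp add: mighty_pr_iff add_pos_nonneg)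
  show "(1 + real (pr j) powr - r) * u_tail (Suc M) r \<in> sigma_st r ` steinitz"
    using sigma_st_left_end[OF r jM, symmetric]
    by (rule rev_image_eqI[OF left_end_exponents_steinitz[OF prime_pr]])
  show "(1 + real (pr j) powr - r) * (1 + real (pr M) powr - r) \<in> sigma_st r ` steinitz"
    using sigma_st_right_end[OF r jM, symmetric]
    by (rule rev_image_eqI[OF right_end_exponents_steinitz[OF prime_pr prime_pr]])
  show "x \<le> (1 + real (pr j) powr - r) * u_tail (Suc M) r
      \<or> (1 + real (pr j) powr - r) * (1 + real (pr M) powr - r) \<le> x"
    if "x \<in> sigma_st r ` steinitz" for x
    using that sigma_st_outside_gap[OF r jM mighty_j sq] by auto
qed

theorem mainTheorem1:
  fixes r :: real and m q :: nat
  assumes "r > 1" and "m \<ge> 1"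
    and "mighty r (nth_prime m)" and "mighty r q"
    and "q ^ 2 < nth_prime m"
  shows "{sigma_nat r q * u_tail m r <..< sigma_nat r (q * nth_prime m)}
           \<in> components (UNIV - sigma_st r ` steinitz)
      \<and> bounded {sigma_nat r q * u_tail m r <..< sigma_nat r (q * nth_prime m)}"
proof -
  obtain j where q: "q = pr j"
    using mighty_imp_eq_pr[OF assms(4)] by blast
  define M where "M = m - 1"
  have m: "m = Suc M" "nth_prime m = pr M"
    using assms(2) by (simp_all add: M_def)
  have "q \<noteq> nth_prime m"
    using assms(5) le_square[of q] by (auto simp: power2_eq_square)
  then have "sigma_nat r q * u_tail m r = (1 + real (pr j) powr - r) * u_tail (Suc M) r"
    "sigma_nat r (q * nth_prime m) = (1 + real (pr j) powr - r) * (1 + real (pr M) powr - r)"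
    by (simp_all add: q m sigma_nat_prime sigma_nat_mult_primes prime_pr)
  moreover have "{(1 + real (pr j) powr - r) * u_tail (Suc M) r <..<
      (1 + real (pr j) powr - r) * (1 + real (pr M) powr - r)} \<in> components (UNIV - sigma_st r ` steinitz)"
    using assms by (intro gap_of_sigma_st) (auto simp: q m)
  ultimately show ?thesis
    by simp
qed

end
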